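(* Let $N\ge2$ and $T\ge1$ be integers. For a sequence $s=(s(1),\dots,s(T))\in\{0,1\}^T$ define $$F(s)=\frac1T\sum_{t=1}^T\Big(1+\sum_{\ell=1}^{t}\prod_{j=\ell}^{t}\Big(1-\frac{s(j)}{N}\Big)\Big).$$ Call $s$ a consecutive blocking sequence (CBS) if its zeros are nonempty and occupy a set of consecutive positions. For a CBS $s$, let $L(s)$ be the number of ones before its block of zeros and $R(s)$ the number of ones after it. Then, for every $m$ with $1\le m\le T$, among all $s\in\{0,1\}^T$ with exactly $m$ zeros, $F$ is maximized by a CBS $s$ with $|L(s)-R(s)|\le1$.
   Context: $F(s)$ is the time-averaged expected age of one user (measured at the end of each slot, starting from age $1$) when a BS schedules that user with probability $1/N$ in every slot and $s(j)=0$ means the user is blocked in slot $j$. *)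

theory Defs
  imports Main "HOL.Real"
begin

text \<open>A sequence s in {0,1}^T is a function nat => nat, relevant on positions 1..T.\<close>

definition binseq :: "nat \<Rightarrow> (nat \<Rightarrow> nat) \<Rightarrow> bool" where
  "binseq T s \<longleftrightarrow> (\<forall>j\<in>{1..T}. s j = 0 \<or> s j = 1)"

definition avgAge :: "nat \<Rightarrow> nat \<Rightarrow> (nat \<Rightarrow> nat) \<Rightarrow> real" where
  "avgAge N T s = (1 / real T) *
     (\<Sum>t=1..T. 1 + (\<Sum>l=1..t. \<Prod>j=l..t. (1 - real (s j) / real N)))"

definition zeros :: "nat \<Rightarrow> (nat \<Rightarrow> nat) \<Rightarrow> nat set" where
  "zeros T s = {j \<in> {1..T}. s j = 0}"

definition is_CBS :: "nat \<Rightarrow> (nat \<Rightarrow> nat) \<Rightarrow> bool" where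
  "is_CBS T s \<longleftrightarrow> binseq T s \<and> zeros T s \<noteq> {} \<and> (\<exists>a b. zeros T s = {a..b})"

definition Lcnt :: "nat \<Rightarrow> (nat \<Rightarrow> nat) \<Rightarrow> nat" where
  "Lcnt T s = card {j \<in> {1..T}. s j = 1 \<and> j < Min (zeros T s)}"

definition Rcnt :: "nat \<Rightarrow> (nat \<Rightarrow> nat) \<Rightarrow> nat" where
  "Rcnt T s = card {j \<in> {1..T}. s j = 1 \<and> j > Max (zeros T s)}"

end

theory Submission imports Defs begin

text \<open>Put q = 1 - 1/N and let \<sigma>(p) be the number of ones before position p. Each product in the
  age equals q^(\<sigma>(t+1) - \<sigma>(l)), so up to an affine change T F(s) is the quadratic form
  sum of q^|\<sigma>(l) - \<sigma>(p)| over l, p \<in> {1..T+1}. Grouping positions by the value of \<sigma>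
  turns it into the sum of h(a) h(b) q^|a - b| over the levels a, b \<in> {0..T-m}, whose multiplicities
  satisfy h \<ge> 1 and \<Sum>h = T + 1: the only freedom is where the m surplus positions go. Since the
  kernel is at most 1 and its row sums peak at the middle level c = (T-m) div 2, the form is
  largest when the whole surplus sits at c, and the sequence with c ones followed by the m zeros
  realises exactly this.\<close>

definition prefix_ones :: "(nat \<Rightarrow> nat) \<Rightarrow> nat \<Rightarrow> nat" where
  "prefix_ones s p = (\<Sum>j\<in>{1..<p}. s j)"

lemma prefix_ones_Suc_0 [simp]: "prefix_ones s (Suc 0) = 0"
  unfolding prefix_ones_def by simp

lemma prefix_ones_Suc: "1 \<le> n \<Longrightarrow> prefix_ones s (Suc n) = prefix_ones s n + s n"
  unfolding prefix_ones_def by simp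

lemma prefix_ones_mono: "1 \<le> l \<Longrightarrow> l \<le> p \<Longrightarrow> prefix_ones s l \<le> prefix_ones s p"
  unfolding prefix_ones_def by (rule sum_mono2) auto

lemma sum_atLeastAtMost_eq_prefix_ones_diff:
  assumes "1 \<le> l" "l \<le> Suc t"
  shows "(\<Sum>j=l..t. s j) = prefix_ones s (Suc t) - prefix_ones s l"
proof -
  have "prefix_ones s l + (\<Sum>j=l..<Suc t. s j) = prefix_ones s (Suc t)"
    unfolding prefix_ones_def using sum.atLeastLessThan_concat[of 1 l "Suc t" s] assms by simp
  moreover have "{l..t} = {l..<Suc t}" by auto
  ultimately show ?thesis by simp
qed

lemma card_zeros_le: "card (zeros T s) \<le> T"
proof -
  have "card (zeros T s) \<le> card {1..T}"
    by (rule card_mono) (auto simp: zeros_def)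
  then show ?thesis by simp
qed

lemma prefix_ones_total:
  assumes "binseq T s"
  shows "prefix_ones s (Suc T) = T - card (zeros T s)"
proof -
  have ones: "{1..T} - zeros T s = {j\<in>{1..T}. s j = 1}"
    using assms unfolding binseq_def zeros_def by auto
  have "prefix_ones s (Suc T) = (\<Sum>j\<in>{1..T}. if s j = 1 then 1 else 0)"
    unfolding prefix_ones_def using assms unfolding binseq_def by (intro sum.cong) auto
  also have "\<dots> = card ({1..T} - zeros T s)"
    unfolding ones by (simp add: sum.If_cases Int_def)
  also have "\<dots> = T - card (zeros T s)"
    by (subst card_Diff_subset) (auto simp: zeros_def)
  finally show ?thesis .
qed

lemma prefix_ones_attains:
  assumes "binseq T s" "1 \<le> n" "n \<le> Suc T" "a \<le> prefix_ones s n"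
  shows "\<exists>l\<in>{1..n}. prefix_ones s l = a"
  using assms(2-4)
proof (induction n rule: dec_induct)
  case base
  then show ?case by force
next
  case (step n)
  show ?case
  proof (cases "a \<le> prefix_ones s n")
    case True
    then show ?thesis using step by force
  next
    case False
    have "s n = 0 \<or> s n = 1" using assms(1) step unfolding binseq_def by auto
    then have "a = prefix_ones s (Suc n)" using False step prefix_ones_Suc[of n s] by auto
    then show ?thesis using step by force
  qed
qed

definition geom_kernel :: "real \<Rightarrow> nat \<Rightarrow> nat \<Rightarrow> real" where
  "geom_kernel q a b = q ^ (if a \<le> b then b - a else a - b)"

lemma geom_kernel_commute: "geom_kernel q a b = geom_kernel q b a"
  unfolding geom_kernel_def by auto

lemma geom_kernel_diag [simp]: "geom_kernel q a a = 1"
  unfolding geom_kernel_def by simp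

lemma geom_kernel_Suc_Suc [simp]: "geom_kernel q (Suc a) (Suc b) = geom_kernel q a b"
  unfolding geom_kernel_def by simp

lemma geom_kernel_le_one: "0 \<le> q \<Longrightarrow> q \<le> 1 \<Longrightarrow> geom_kernel q a b \<le> 1"
  unfolding geom_kernel_def by (auto intro: power_le_one)

lemma geom_kernel_row_sum_Suc:
  assumes "a < k"
  shows "(\<Sum>b=0..k. geom_kernel q (Suc a) b) = (\<Sum>b=0..k. geom_kernel q a b) + q ^ Suc a - q ^ (k - a)"
proof -
  obtain k' where k: "k = Suc k'" using assms by (cases k) auto
  have "(\<Sum>b=0..k. geom_kernel q (Suc a) b)
      = geom_kernel q (Suc a) 0 + (\<Sum>b=Suc 0..Suc k'. geom_kernel q (Suc a) b)"
    unfolding k by (simp add: sum.atLeast_Suc_atMost)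
  also have "(\<Sum>b=Suc 0..Suc k'. geom_kernel q (Suc a) b) = (\<Sum>b=0..k'. geom_kernel q a b)"
    by (simp only: sum.shift_bounds_cl_Suc_ivl geom_kernel_Suc_Suc)
  moreover have "(\<Sum>b=0..k. geom_kernel q a b) = (\<Sum>b=0..k'. geom_kernel q a b) + geom_kernel q a k"
    unfolding k by simp
  moreover have "geom_kernel q (Suc a) 0 = q ^ Suc a" and "geom_kernel q a k = q ^ (k - a)"
    unfolding geom_kernel_def using assms by auto
  ultimately show ?thesis by simp
qed

lemma geom_kernel_row_sum_le_middle:
  assumes "0 \<le> q" "q \<le> 1" "a \<le> k"
  shows "(\<Sum>b=0..k. geom_kernel q a b) \<le> (\<Sum>b=0..k. geom_kernel q (k div 2) b)"
proof -
  define row where "row a = (\<Sum>b=0..k. geom_kernel q a b)" for a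
  have up: "row n \<le> row (Suc n)" if "2 * n + 1 \<le> k" for n
  proof -
    have "q ^ (k - n) \<le> q ^ Suc n" using that assms by (intro power_decreasing) auto
    then show ?thesis unfolding row_def using geom_kernel_row_sum_Suc[of n k q] that by simp
  qed
  have down: "row (Suc n) \<le> row n" if "k \<le> 2 * n + 1" "n < k" for n
  proof -
    have "q ^ Suc n \<le> q ^ (k - n)" using that assms by (intro power_decreasing) auto
    then show ?thesis unfolding row_def using geom_kernel_row_sum_Suc[of n k q] that by simp
  qed
  have "row a \<le> row (k div 2)"
  proof (cases "a \<le> k div 2")
    case True
    then show ?thesis
    proof (induction rule: inc_induct)
      case (step n)
      then show ?case using up[of n] by linarith
    qed simp
  next
    case False
    then have "k div 2 \<le> a" by simp
    then show ?thesis using \<open>a \<le> k\<close>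
    proof (induction rule: dec_induct)
      case (step n)
      then show ?case using down[of n] by linarith
    qed simp
  qed
  then show ?thesis unfolding row_def .
qed

lemma prod_one_minus_eq_power:
  assumes "binseq T s" "1 \<le> l" "t \<le> T"
  shows "(\<Prod>j=l..t. 1 - real (s j) / real N) = (1 - 1 / real N) ^ (\<Sum>j=l..t. s j)"
proof -
  have "(\<Prod>j=l..t. 1 - real (s j) / real N) = (\<Prod>j=l..t. (1 - 1 / real N) ^ s j)"
  proof (rule prod.cong)
    fix j assume "j \<in> {l..t}"
    then have "s j = 0 \<or> s j = 1" using assms unfolding binseq_def by auto
    then show "1 - real (s j) / real N = (1 - 1 / real N) ^ s j" by auto
  qed simp
  then show ?thesis by (simp add: power_sum)
qed

lemma sum_square_symmetric:
  fixes f :: "nat \<Rightarrow> nat \<Rightarrow> 'a::comm_semiring_1"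
  assumes "\<And>l p. f l p = f p l"
  shows "(\<Sum>l=1..Suc n. \<Sum>p=1..Suc n. f l p)
       = (\<Sum>l=1..Suc n. f l l) + 2 * (\<Sum>t=1..n. \<Sum>l=1..t. f l (Suc t))"
proof (induction n)
  case 0
  then show ?case by simp
next
  case (Suc n)
  have peel: "\<And>g::nat \<Rightarrow> 'a. (\<Sum>l=1..Suc (Suc n). g l) = (\<Sum>l=1..Suc n. g l) + g (Suc (Suc n))"
    by simp
  have row: "(\<Sum>p=1..Suc n. f (Suc (Suc n)) p) = (\<Sum>l=1..Suc n. f l (Suc (Suc n)))"
    using assms by metis
  show ?case
    by (simp only: peel sum.distrib Suc.IH row) (simp add: algebra_simps mult_2)
qed

lemma avgAge_eq_kernel_form:
  assumes "binseq T s"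
  shows "real T * avgAge N T s = real T +
     ((\<Sum>l=1..Suc T. \<Sum>p=1..Suc T. geom_kernel (1 - 1 / real N) (prefix_ones s l) (prefix_ones s p))
       - real (Suc T)) / 2"
proof -
  define K where "K l p = geom_kernel (1 - 1 / real N) (prefix_ones s l) (prefix_ones s p)" for l p
  define X where "X = (\<Sum>t=1..T. \<Sum>l=1..t. \<Prod>j=l..t. (1 - real (s j) / real N))"
  have avg: "real T * avgAge N T s = real T + X"
    unfolding avgAge_def X_def by (cases "T = 0") (simp_all add: sum.distrib)
  have "X = (\<Sum>t=1..T. \<Sum>l=1..t. K l (Suc t))"
    unfolding X_def
  proof (intro sum.cong refl)
    fix t l assume "t \<in> {1..T}" "l \<in> {1..t}"
    then show "(\<Prod>j=l..t. 1 - real (s j) / real N) = K l (Suc t)"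
      using prod_one_minus_eq_power[OF assms, of l t N] sum_atLeastAtMost_eq_prefix_ones_diff[of l t s]
        prefix_ones_mono[of l "Suc t" s]
      unfolding K_def geom_kernel_def by auto
  qed
  then have "(\<Sum>l=1..Suc T. \<Sum>p=1..Suc T. K l p) = real (Suc T) + 2 * X"
    using sum_square_symmetric[of K T] geom_kernel_commute unfolding K_def by simp
  then show ?thesis using avg unfolding K_def by simp
qed

lemma sum_comp_eq_sum_card_fibres:
  fixes G :: "'b \<Rightarrow> 'c::comm_semiring_1"
  assumes "finite P" "finite A" "\<sigma> ` P \<subseteq> A"
  shows "(\<Sum>l\<in>P. G (\<sigma> l)) = (\<Sum>a\<in>A. of_nat (card {l\<in>P. \<sigma> l = a}) * G a)"
proof -
  have "(\<Sum>l\<in>P. G (\<sigma> l)) = (\<Sum>a\<in>A. \<Sum>l\<in>{l\<in>P. \<sigma> l = a}. G (\<sigma> l))"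
    using sum.group[OF assms, of "\<lambda>l. G (\<sigma> l)"] by simp
  also have "\<dots> = (\<Sum>a\<in>A. of_nat (card {l\<in>P. \<sigma> l = a}) * G a)"
    by (rule sum.cong) auto
  finally show ?thesis .
qed

lemma sum_sum_comp_eq_sum_card_fibres:
  fixes f :: "'b \<Rightarrow> 'b \<Rightarrow> 'c::comm_semiring_1"
  assumes "finite P" "finite A" "\<sigma> ` P \<subseteq> A"
  shows "(\<Sum>l\<in>P. \<Sum>p\<in>P. f (\<sigma> l) (\<sigma> p)) =
         (\<Sum>a\<in>A. \<Sum>b\<in>A. of_nat (card {l\<in>P. \<sigma> l = a}) * of_nat (card {l\<in>P. \<sigma> l = b}) * f a b)"
proof -
  let ?c = "\<lambda>a. of_nat (card {l\<in>P. \<sigma> l = a}) :: 'c"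
  have "(\<Sum>l\<in>P. \<Sum>p\<in>P. f (\<sigma> l) (\<sigma> p)) = (\<Sum>l\<in>P. \<Sum>b\<in>A. ?c b * f (\<sigma> l) b)"
    by (simp add: sum_comp_eq_sum_card_fibres[OF assms])
  also have "\<dots> = (\<Sum>b\<in>A. \<Sum>l\<in>P. ?c b * f (\<sigma> l) b)"
    by (rule sum.swap)
  also have "\<dots> = (\<Sum>b\<in>A. \<Sum>a\<in>A. ?c a * (?c b * f a b))"
    by (simp add: sum_comp_eq_sum_card_fibres[OF assms, of "\<lambda>a. ?c _ * f a _"])
  also have "\<dots> = (\<Sum>a\<in>A. \<Sum>b\<in>A. ?c a * ?c b * f a b)"
    by (subst sum.swap) (simp add: mult.assoc)
  finally show ?thesis .
qed

definition level_mult :: "nat \<Rightarrow> (nat \<Rightarrow> nat) \<Rightarrow> nat \<Rightarrow> nat" where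
  "level_mult T s a = card {l\<in>{1..Suc T}. prefix_ones s l = a}"

lemma prefix_ones_image:
  assumes "binseq T s"
  shows "prefix_ones s ` {1..Suc T} \<subseteq> {0..T - card (zeros T s)}"
  using prefix_ones_mono[of _ "Suc T" s] prefix_ones_total[OF assms] by auto

lemma level_mult_pos:
  assumes "binseq T s" "a \<le> T - card (zeros T s)"
  shows "1 \<le> level_mult T s a"
proof -
  obtain l where "l \<in> {1..Suc T}" "prefix_ones s l = a"
    using prefix_ones_attains[OF assms(1), of "Suc T" a] prefix_ones_total[OF assms(1)] assms(2) by auto
  then have "{l\<in>{1..Suc T}. prefix_ones s l = a} \<noteq> {}" by auto
  then show ?thesis unfolding level_mult_def by (simp add: Suc_le_eq card_gt_0_iff)
qed

lemma sum_level_mult: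
  assumes "binseq T s"
  shows "(\<Sum>a=0..T - card (zeros T s). level_mult T s a) = Suc T"
  using sum_comp_eq_sum_card_fibres[OF _ _ prefix_ones_image[OF assms], of "\<lambda>_. 1::nat"]
  unfolding level_mult_def by simp

lemma avgAge_eq_level_form:
  assumes "binseq T s"
  shows "real T * avgAge N T s = real T +
     ((\<Sum>a=0..T - card (zeros T s). \<Sum>b=0..T - card (zeros T s).
        real (level_mult T s a) * real (level_mult T s b) * geom_kernel (1 - 1 / real N) a b)
       - real (Suc T)) / 2"
  unfolding avgAge_eq_kernel_form[OF assms] level_mult_def
  by (subst sum_sum_comp_eq_sum_card_fibres[OF _ _ prefix_ones_image[OF assms]]) simp_all

lemma quadratic_form_one_plus:
  fixes g :: "'a \<Rightarrow> real" and K :: "'a \<Rightarrow> 'a \<Rightarrow> real"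
  assumes "\<And>a b. K a b = K b a"
  shows "(\<Sum>a\<in>A. \<Sum>b\<in>A. (1 + g a) * (1 + g b) * K a b) =
         (\<Sum>a\<in>A. \<Sum>b\<in>A. K a b) + 2 * (\<Sum>a\<in>A. g a * (\<Sum>b\<in>A. K a b))
         + (\<Sum>a\<in>A. \<Sum>b\<in>A. g a * g b * K a b)"
proof -
  have expand: "(1 + g a) * (1 + g b) * K a b = K a b + g a * K a b + g b * K b a + g a * g b * K a b"
    for a b using assms by (simp add: algebra_simps)
  have "(\<Sum>a\<in>A. \<Sum>b\<in>A. g b * K b a) = (\<Sum>a\<in>A. g a * (\<Sum>b\<in>A. K a b))"
    by (subst sum.swap) (simp add: sum_distrib_left)
  then show ?thesis
    unfolding expand sum.distrib by (simp add: sum_distrib_left)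
qed

text \<open>Writing w = 1 + g, the cross term is at most m times the largest row sum and, as K \<le> 1,
  the quadratic term in g is at most (\<Sum>g)^2 = m^2; the concentrated weight attains both bounds.\<close>
lemma quadratic_form_le_concentrated:
  fixes K :: "'a \<Rightarrow> 'a \<Rightarrow> real" and w :: "'a \<Rightarrow> real"
  assumes fin: "finite A" and c: "c \<in> A"
    and sym: "\<And>a b. K a b = K b a" and K1: "\<And>a b. K a b \<le> 1"
    and Kc: "K c c = 1"
    and row_max: "\<And>a. a \<in> A \<Longrightarrow> (\<Sum>b\<in>A. K a b) \<le> (\<Sum>b\<in>A. K c b)"
    and w1: "\<And>a. a \<in> A \<Longrightarrow> 1 \<le> w a" and w_sum: "(\<Sum>a\<in>A. w a) = real (card A) + m"
  shows "(\<Sum>a\<in>A. \<Sum>b\<in>A. w a * w b * K a b) \<le>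
         (\<Sum>a\<in>A. \<Sum>b\<in>A. (if a = c then 1 + m else 1) * (if b = c then 1 + m else 1) * K a b)"
proof -
  define g where "g a = w a - 1" for a
  define e where "e a = (if a = c then m else 0)" for a
  define row where "row a = (\<Sum>b\<in>A. K a b)" for a
  have w_g: "w a = 1 + g a" and conc_e: "(if a = c then 1 + m else 1) = 1 + e a" for a
    unfolding g_def e_def by simp_all
  have e_mult: "e a * x = (if a = c then m * x else 0)" for a x
    unfolding e_def by simp
  have g0: "a \<in> A \<Longrightarrow> 0 \<le> g a" for a using w1 unfolding g_def by fastforce
  have g_sum: "(\<Sum>a\<in>A. g a) = m"
    using w_sum unfolding g_def by (simp add: sum_subtractf)
  have "(\<Sum>a\<in>A. g a * row a) \<le> (\<Sum>a\<in>A. g a * row c)"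
    by (rule sum_mono) (use g0 row_max in \<open>auto simp: row_def intro: mult_left_mono\<close>)
  also have "\<dots> = (\<Sum>a\<in>A. e a * row a)"
    using fin c g_sum by (simp add: e_mult sum_distrib_right[symmetric])
  finally have cross: "(\<Sum>a\<in>A. g a * row a) \<le> (\<Sum>a\<in>A. e a * row a)" .
  have "(\<Sum>a\<in>A. \<Sum>b\<in>A. g a * g b * K a b) \<le> (\<Sum>a\<in>A. \<Sum>b\<in>A. g a * g b)"
    by (intro sum_mono) (use g0 K1 in \<open>simp add: mult_left_le\<close>)
  also have "\<dots> = m * m"
    using g_sum by (simp add: sum_product[symmetric])
  also have "\<dots> = (\<Sum>a\<in>A. e a * (\<Sum>b\<in>A. e b * K a b))"
    using fin c Kc by (simp add: e_mult)
  also have "\<dots> = (\<Sum>a\<in>A. \<Sum>b\<in>A. e a * e b * K a b)"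
    by (simp add: sum_distrib_left mult.assoc)
  finally have square: "(\<Sum>a\<in>A. \<Sum>b\<in>A. g a * g b * K a b) \<le> (\<Sum>a\<in>A. \<Sum>b\<in>A. e a * e b * K a b)" .
  show ?thesis
    unfolding w_g conc_e quadratic_form_one_plus[of K, OF sym]
    using cross square unfolding row_def by linarith
qed

definition zero_block :: "nat \<Rightarrow> nat \<Rightarrow> nat \<Rightarrow> nat" where
  "zero_block c m j = (if c < j \<and> j \<le> c + m then 0 else 1)"

lemma binseq_zero_block: "binseq T (zero_block c m)"
  unfolding binseq_def zero_block_def by auto

lemma zeros_zero_block: "c + m \<le> T \<Longrightarrow> zeros T (zero_block c m) = {c + 1..c + m}"
  unfolding zeros_def zero_block_def by auto

lemma is_CBS_zero_block: "1 \<le> m \<Longrightarrow> c + m \<le> T \<Longrightarrow> is_CBS T (zero_block c m)"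
  unfolding is_CBS_def using binseq_zero_block zeros_zero_block by fastforce

lemma Lcnt_zero_block:
  assumes "1 \<le> m" "c + m \<le> T"
  shows "Lcnt T (zero_block c m) = c"
proof -
  have "Min (zeros T (zero_block c m)) = c + 1"
    unfolding zeros_zero_block[OF assms(2)] using assms(1) by (intro Min_eqI) auto
  then have "{j\<in>{1..T}. zero_block c m j = 1 \<and> j < Min (zeros T (zero_block c m))} = {1..c}"
    using assms by (auto simp: zero_block_def)
  then show ?thesis unfolding Lcnt_def by simp
qed

lemma Rcnt_zero_block:
  assumes "1 \<le> m" "c + m \<le> T"
  shows "Rcnt T (zero_block c m) = T - m - c"
proof -
  have "Max (zeros T (zero_block c m)) = c + m"
    unfolding zeros_zero_block[OF assms(2)] using assms(1) by (intro Max_eqI) auto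
  then have "{j\<in>{1..T}. zero_block c m j = 1 \<and> j > Max (zeros T (zero_block c m))} = {c + m + 1..T}"
    using assms by (auto simp: zero_block_def)
  then show ?thesis unfolding Rcnt_def by simp
qed

lemma prefix_ones_zero_block:
  assumes "1 \<le> p"
  shows "prefix_ones (zero_block c m) p =
    (if p \<le> c + 1 then p - 1 else if p \<le> c + m + 1 then c else p - 1 - m)"
  using assms
proof (induction p rule: dec_induct)
  case base
  then show ?case by simp
next
  case (step n)
  then show ?case using prefix_ones_Suc[of n "zero_block c m"] unfolding zero_block_def by auto
qed

lemma level_mult_zero_block:
  assumes "c + m \<le> T" "a \<le> T - m"
  shows "level_mult T (zero_block c m) a = (if a = c then 1 + m else 1)"
proof -
  let ?L = "{l\<in>{1..Suc T}. prefix_ones (zero_block c m) l = a}"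
  consider "a < c" | "a = c" | "c < a" by linarith
  then show ?thesis
  proof cases
    case 1
    then have "?L = {a + 1}" using assms by (auto simp: prefix_ones_zero_block split: if_splits)
    then show ?thesis using 1 unfolding level_mult_def by simp
  next
    case 2
    then have "?L = {c + 1..c + m + 1}" using assms by (auto simp: prefix_ones_zero_block split: if_splits)
    then show ?thesis using 2 unfolding level_mult_def by simp
  next
    case 3
    then have "?L = {a + m + 1}" using assms by (auto simp: prefix_ones_zero_block split: if_splits)
    then show ?thesis using 3 unfolding level_mult_def by simp
  qed
qed

lemma avgAge_le_middle_zero_block:
  assumes s: "binseq T s" and m: "card (zeros T s) = m"
  shows "avgAge N T s \<le> avgAge N T (zero_block ((T - m) div 2) m)"
proof (cases "T = 0")
  case True
  then show ?thesis by (simp add: avgAge_def)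
next
  case False
  define k where "k = T - m"
  define c where "c = k div 2"
  define q where "q = 1 - 1 / real N"
  let ?z = "zero_block c m"
  let ?Q = "\<lambda>w. \<Sum>a=0..k. \<Sum>b=0..k. w a * w b * geom_kernel q a b"
  have cm: "c + m \<le> T" using card_zeros_le[of T s] unfolding m k_def c_def by simp
  have z: "card (zeros T ?z) = m" using cm by (simp add: zeros_zero_block)
  have q0: "0 \<le> q" and q1: "q \<le> 1" unfolding q_def by (cases "N = 0"; simp)+
  have "?Q (\<lambda>a. real (level_mult T s a)) \<le> ?Q (\<lambda>a. if a = c then 1 + real m else 1)"
  proof (rule quadratic_form_le_concentrated)
    show "(\<Sum>b=0..k. geom_kernel q a b) \<le> (\<Sum>b=0..k. geom_kernel q c b)" if "a \<in> {0..k}" for a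
      using geom_kernel_row_sum_le_middle[OF q0 q1] that unfolding c_def by simp
    show "1 \<le> real (level_mult T s a)" if "a \<in> {0..k}" for a
      using level_mult_pos[OF s] that unfolding m k_def by simp
    show "(\<Sum>a=0..k. real (level_mult T s a)) = real (card {0..k}) + real m"
      using sum_level_mult[OF s] card_zeros_le[of T s] unfolding m k_def of_nat_sum[symmetric] by simp
  qed (use geom_kernel_commute geom_kernel_le_one[OF q0 q1] c_def in auto)
  also have "\<dots> = ?Q (\<lambda>a. real (level_mult T ?z a))"
    using level_mult_zero_block[OF cm] unfolding k_def by (intro sum.cong refl) simp
  finally have "real T * avgAge N T s \<le> real T * avgAge N T ?z"
    unfolding avgAge_eq_level_form[OF s] avgAge_eq_level_form[OF binseq_zero_block] m z q_def k_def
    by simp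
  then show ?thesis using False unfolding k_def c_def by simp
qed

theorem lemma5:
  fixes N T m :: nat
  assumes "N \<ge> 2" and "T \<ge> 1" and "1 \<le> m" and "m \<le> T"
  shows "\<exists>s. is_CBS T s \<and> card (zeros T s) = m \<and>
           \<bar>int (Lcnt T s) - int (Rcnt T s)\<bar> \<le> 1 \<and>
           (\<forall>s'. binseq T s' \<and> card (zeros T s') = m \<longrightarrow> avgAge N T s' \<le> avgAge N T s)"
proof -
  define c where "c = (T - m) div 2"
  have cm: "c + m \<le> T" using assms(4) unfolding c_def by simp
  show ?thesis
  proof (intro exI conjI allI impI)
    show "is_CBS T (zero_block c m)" using is_CBS_zero_block[OF assms(3) cm] .
    show "card (zeros T (zero_block c m)) = m" using cm by (simp add: zeros_zero_block)
    show "\<bar>int (Lcnt T (zero_block c m)) - int (Rcnt T (zero_block c m))\<bar> \<le> 1"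
      using Lcnt_zero_block[OF assms(3) cm] Rcnt_zero_block[OF assms(3) cm] unfolding c_def by linarith
    show "avgAge N T s' \<le> avgAge N T (zero_block c m)" if "binseq T s' \<and> card (zeros T s') = m" for s'
      using avgAge_le_middle_zero_block[of T s' m N] that unfolding c_def by simp
  qed
qed

end
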